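(* Let $k\ge2$ and let $A\in\mathbf{GL}(n,\mathbb Z)$ satisfy $A\equiv I\bmod 2$ and $A^2\equiv I\bmod 2^{k+1}$. Then there exists $p\in\mathbf{GL}(n,\mathbb Z)$ such that $p^{-1}Ap$ is congruent modulo $2^k$ to a diagonal matrix with diagonal entries $\pm1$. Moreover, if $A=\begin{pmatrix}I_q&0\\ *&*\end{pmatrix}$ (block form with respect to $n=q+(n-q)$), then $p$ may be chosen of the form $\begin{pmatrix}I_q&0\\ *&*\end{pmatrix}$. *)

theory Defs
  imports "Jordan_Normal_Form.Matrix" "HOL-Number_Theory.Cong"
begin

definition mat_cong_mod :: "int \<Rightarrow> int mat \<Rightarrow> int mat \<Rightarrow> bool" where
  "mat_cong_mod m A B \<longleftrightarrow> dim_row A = dim_row B \<and> dim_col A = dim_col B \<and>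
     (\<forall>i<dim_row A. \<forall>j<dim_col A. [A $$ (i,j) = B $$ (i,j)] (mod m))"

definition top_identity_block :: "nat \<Rightarrow> int mat \<Rightarrow> bool" where
  "top_identity_block q A \<longleftrightarrow> q \<le> dim_row A \<and>
     (\<forall>i<q. \<forall>j<dim_col A. A $$ (i,j) = (if i = j then 1 else 0))"

definition sign_diagonal :: "int mat \<Rightarrow> bool" where
  "sign_diagonal D \<longleftrightarrow> diagonal_mat D \<and> (\<forall>i<dim_row D. D $$ (i,i) \<in> {1, -1})"

end

theory Submission
  imports Defs
begin

text \<open>
  Write \<open>A = 1 - 2 E\<close>. Then \<open>A\<^sup>2 = 1 - 4 (E - E\<^sup>2)\<close>, so \<open>A\<^sup>2 \<equiv> 1 mod 2\<^sup>k\<^sup>+\<^sup>1\<close> says exactly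
  that \<open>E\<close> is idempotent modulo \<open>m = 2\<^sup>k\<^sup>-\<^sup>1\<close>, and it suffices to conjugate \<open>E\<close> into a
  diagonal 0/1 matrix \<open>D\<close> modulo \<open>m\<close>: then \<open>A\<close> becomes \<open>1 - 2 D\<close> modulo \<open>2\<^sup>k\<close>.
  This is done pivot by pivot. As \<open>\<int>/m\<close> is local, one of \<open>E\<^sub>j\<^sub>j\<close> and \<open>1 - E\<^sub>j\<^sub>j\<close> is a
  unit; replacing \<open>E\<close> by the idempotent \<open>1 - E\<close> if necessary, let \<open>u E\<^sub>j\<^sub>j \<equiv> 1\<close>.
  The transvection \<open>P = 1 + c e\<^sub>j\<^sup>T\<close> with \<open>c \<equiv> u E e\<^sub>j\<close> off the pivot satisfies
  \<open>P e\<^sub>j \<equiv> u E e\<^sub>j\<close>, so idempotence gives \<open>E P e\<^sub>j \<equiv> P e\<^sub>j\<close> and column \<open>j\<close> of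
  \<open>P\<^sup>-\<^sup>1 E P\<close> becomes \<open>e\<^sub>j\<close>; the transposed construction then clears row \<open>j\<close>.
  The column transvection only changes rows in which column \<open>j\<close> is nonzero modulo \<open>m\<close>,
  and the row transvection only changes row \<open>j\<close>, which is already clean when \<open>j < q\<close>;
  so if the first \<open>q\<close> rows of \<open>A\<close> (hence of \<open>E\<close>) are those of the identity, the
  conjugating matrix keeps this block form.
\<close>

definition vec_cong_mod :: "int \<Rightarrow> int vec \<Rightarrow> int vec \<Rightarrow> bool" where
  "vec_cong_mod m v w \<longleftrightarrow> dim_vec v = dim_vec w \<and> (\<forall>i<dim_vec v. [v $ i = w $ i] (mod m))"

lemma vec_cong_mod_sym: "vec_cong_mod m v w \<Longrightarrow> vec_cong_mod m w v"
  unfolding vec_cong_mod_def by (auto intro: cong_sym)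

lemma vec_cong_mod_trans [trans]:
  "vec_cong_mod m u v \<Longrightarrow> vec_cong_mod m v w \<Longrightarrow> vec_cong_mod m u w"
  unfolding vec_cong_mod_def by (metis cong_trans)

lemma vec_cong_mod_smult: "vec_cong_mod m v w \<Longrightarrow> vec_cong_mod m (c \<cdot>\<^sub>v v) (c \<cdot>\<^sub>v w)"
  unfolding vec_cong_mod_def by (auto intro: cong_scalar_left)

lemma vec_cong_mod_mult_mat_vec:
  assumes "vec_cong_mod m v w" "dim_vec v = dim_col A"
  shows "vec_cong_mod m (A *\<^sub>v v) (A *\<^sub>v w)"
  using assms unfolding vec_cong_mod_def
  by (auto simp: scalar_prod_def intro!: cong_sum cong_mult)

lemma mat_cong_mod_refl: "mat_cong_mod m A A"
  by (simp add: mat_cong_mod_def)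

lemma mat_cong_mod_col:
  "mat_cong_mod m A B \<Longrightarrow> j < dim_col A \<Longrightarrow> vec_cong_mod m (col A j) (col B j)"
  unfolding mat_cong_mod_def vec_cong_mod_def by auto

lemma mat_cong_modI:
  assumes "A \<in> carrier_mat nr nc" "B \<in> carrier_mat nr nc"
    and "\<And>i j. i < nr \<Longrightarrow> j < nc \<Longrightarrow> [A $$ (i,j) = B $$ (i,j)] (mod m)"
  shows "mat_cong_mod m A B"
  using assms unfolding mat_cong_mod_def by auto

lemma mat_cong_mod_transpose:
  "mat_cong_mod m A B \<Longrightarrow> mat_cong_mod m (transpose_mat A) (transpose_mat B)"
  unfolding mat_cong_mod_def by auto

lemma mat_cong_mod_mult:
  assumes "mat_cong_mod m A A'" "mat_cong_mod m B B'" "dim_col A = dim_row B"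
  shows "mat_cong_mod m (A * B) (A' * B')"
  using assms unfolding mat_cong_mod_def
  by (auto simp: scalar_prod_def intro!: cong_sum cong_mult)

lemma mult_mat_vec_smult:
  fixes A :: "'a::comm_ring_1 mat"
  assumes "dim_vec v = dim_col A"
  shows "A *\<^sub>v (c \<cdot>\<^sub>v v) = c \<cdot>\<^sub>v (A *\<^sub>v v)"
  using assms
  by (intro eq_vecI) (auto simp: scalar_prod_def sum_distrib_left ac_simps)

lemma mult_mat_vec_unit_vec:
  fixes A :: "'a::semiring_1 mat"
  assumes "A \<in> carrier_mat nr n" "j < n"
  shows "A *\<^sub>v unit_vec n j = col A j"
  using assms by (intro eq_vecI) auto

lemma row_mult_unit_row:
  fixes X :: "'a::semiring_1 mat"
  assumes "X \<in> carrier_mat n n" "M \<in> carrier_mat n k" "i < n" "row X i = unit_vec n i"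
  shows "row (X * M) i = row M i"
  using assms by (intro eq_vecI) auto

lemma col_mult_unit_col:
  fixes X :: "'a::semiring_1 mat"
  assumes "X \<in> carrier_mat n n" "M \<in> carrier_mat k n" "j < n" "col X j = unit_vec n j"
  shows "col (M * X) j = col M j"
  using assms by (intro eq_vecI) auto

section \<open>Transvections and similarity\<close>

definition transvection :: "nat \<Rightarrow> (nat \<Rightarrow> 'a::comm_ring_1) \<Rightarrow> (nat \<Rightarrow> 'a) \<Rightarrow> 'a mat" where
  "transvection n x y = mat n n (\<lambda>(a,b). (if a = b then 1 else 0) + x a * y b)"

lemma transvection_carrier [simp]: "transvection n x y \<in> carrier_mat n n"
  by (simp add: transvection_def)

lemma transvection_mult_neg:
  assumes "(\<Sum>t<n. y t * x t) = 0"
  shows "transvection n x y * transvection n (\<lambda>a. - x a) y = 1\<^sub>m n"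
proof (rule eq_matI)
  fix a b assume "a < dim_row (1\<^sub>m n)" "b < dim_col (1\<^sub>m n)"
  then have ab: "a < n" "b < n" by auto
  have summand: "((if a = t then 1 else 0) + x a * y t) * ((if t = b then 1 else 0) - x t * y b) =
      (if t = a then (if t = b then 1 else 0) - x t * y b else 0) + (if t = b then x a * y t else 0)
      - x a * y b * (y t * x t)" for t
    by (simp add: algebra_simps)
  have "(transvection n x y * transvection n (\<lambda>a. - x a) y) $$ (a,b) =
      (\<Sum>t<n. ((if a = t then 1 else 0) + x a * y t) * ((if t = b then 1 else 0) - x t * y b))"
    using ab by (simp add: transvection_def scalar_prod_def atLeast0LessThan)
  also have "\<dots> = (if a = b then 1 else 0) - x a * y b * (\<Sum>t<n. y t * x t)"
    unfolding summand using ab by (simp add: sum.distrib sum_subtractf sum_distrib_left)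
  finally show "(transvection n x y * transvection n (\<lambda>a. - x a) y) $$ (a,b) = 1\<^sub>m n $$ (a,b)"
    using ab assms by simp
qed (auto simp: transvection_def)

lemma row_transvection:
  "a < n \<Longrightarrow> x a = 0 \<Longrightarrow> row (transvection n x y) a = unit_vec n a"
  by (intro eq_vecI) (auto simp: transvection_def)

lemma col_transvection:
  "b < n \<Longrightarrow> y b = 0 \<Longrightarrow> col (transvection n x y) b = unit_vec n b"
  by (intro eq_vecI) (auto simp: transvection_def)

lemma similar_mat_wit_conjI:
  assumes "A \<in> carrier_mat n n" "P \<in> carrier_mat n n" "Q \<in> carrier_mat n n"
    and "P * Q = 1\<^sub>m n" "Q * P = 1\<^sub>m n"
  shows "similar_mat_wit A (Q * A * P) P Q"
proof (rule similar_mat_witI[OF assms(4,5)])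
  have "P * (Q * A * P) * Q = (P * Q) * A * (P * Q)"
    using assms(1-3) by (simp add: assoc_mult_mat[of _ n n _ n _ n])
  then show "A = P * (Q * A * P) * Q"
    using assms by simp
qed (use assms in auto)

lemma similar_mat_wit_transvection:
  assumes "A \<in> carrier_mat n n" "(\<Sum>t<n. y t * x t) = 0"
  shows "similar_mat_wit A (transvection n (\<lambda>a. - x a) y * A * transvection n x y)
    (transvection n x y) (transvection n (\<lambda>a. - x a) y)"
proof (rule similar_mat_wit_conjI[OF assms(1)])
  show "transvection n x y * transvection n (\<lambda>a. - x a) y = 1\<^sub>m n"
    using assms(2) by (rule transvection_mult_neg)
  show "transvection n (\<lambda>a. - x a) y * transvection n x y = 1\<^sub>m n"
    using transvection_mult_neg[where x = "\<lambda>a. - x a"] assms(2) by (simp add: sum_negf)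
qed auto

lemma similar_mat_wit_conj: "similar_mat_wit A B P Q \<Longrightarrow> B = Q * A * P"
  using similar_mat_witD(3)[OF refl similar_mat_wit_sym] by blast

lemma similar_mat_wit_transpose:
  fixes A B P Q :: "'a::comm_semiring_1 mat"
  assumes "similar_mat_wit A B P Q"
  shows "similar_mat_wit (transpose_mat A) (transpose_mat B) (transpose_mat Q) (transpose_mat P)"
proof -
  obtain n where carr: "A \<in> carrier_mat n n" "B \<in> carrier_mat n n" "P \<in> carrier_mat n n" "Q \<in> carrier_mat n n"
    and PQ: "P * Q = 1\<^sub>m n" "Q * P = 1\<^sub>m n" and A: "A = P * B * Q"
    using similar_mat_witD[OF refl assms] by blast
  have "transpose_mat A = transpose_mat Q * transpose_mat (P * B)"
    unfolding A by (rule transpose_mult) (use carr in auto)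
  also have "\<dots> = transpose_mat Q * transpose_mat B * transpose_mat P"
    using carr by (simp add: transpose_mult[OF carr(3,2)] assoc_mult_mat[of _ n n _ n _ n])
  finally have A': "transpose_mat A = transpose_mat Q * transpose_mat B * transpose_mat P" .
  show ?thesis
  proof (rule similar_mat_witI[OF _ _ A'])
    show "transpose_mat Q * transpose_mat P = 1\<^sub>m n"
      using transpose_mult[OF carr(3,4)] PQ(1) by simp
    show "transpose_mat P * transpose_mat Q = 1\<^sub>m n"
      using transpose_mult[OF carr(4,3)] PQ(2) by simp
  qed (use carr in auto)
qed

lemma similar_mat_wit_idempotent_mod:
  assumes "similar_mat_wit A B P Q" "mat_cong_mod m (A * A) A"
  shows "mat_cong_mod m (B * B) B"
proof -
  obtain n where carr: "A \<in> carrier_mat n n" "P \<in> carrier_mat n n" "Q \<in> carrier_mat n n"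
    and PQ: "P * Q = 1\<^sub>m n" and B: "B = Q * A * P"
    using similar_mat_witD[OF refl assms(1)] similar_mat_wit_conj[OF assms(1)] by blast
  have "B * B = Q * (A * A) * P"
  proof -
    have "B * B = Q * A * (P * Q) * A * P"
      using carr unfolding B by (simp add: assoc_mult_mat[of _ n n _ n _ n])
    then show ?thesis
      using carr unfolding PQ by (simp add: assoc_mult_mat[of _ n n _ n _ n])
  qed
  moreover have "mat_cong_mod m (Q * (A * A) * P) (Q * A * P)"
    using carr assms(2) by (intro mat_cong_mod_mult mat_cong_mod_refl) auto
  ultimately show ?thesis
    unfolding B by simp
qed

lemma similar_mat_wit_one_minus_smult:
  fixes A B :: "'a::comm_ring_1 mat"
  assumes "similar_mat_wit A B P Q" "A \<in> carrier_mat n n"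
  shows "similar_mat_wit (1\<^sub>m n - c \<cdot>\<^sub>m A) (1\<^sub>m n - c \<cdot>\<^sub>m B) P Q"
proof -
  have carr: "B \<in> carrier_mat n n" "P \<in> carrier_mat n n" "Q \<in> carrier_mat n n"
    and PQ: "P * Q = 1\<^sub>m n" "Q * P = 1\<^sub>m n" and A: "A = P * B * Q"
    using similar_mat_witD2[OF assms(2,1)] by auto
  have "P * (1\<^sub>m n - c \<cdot>\<^sub>m B) = P * 1\<^sub>m n - P * (c \<cdot>\<^sub>m B)"
    by (rule mult_minus_distrib_mat) (use carr in auto)
  then have "P * (1\<^sub>m n - c \<cdot>\<^sub>m B) = P - c \<cdot>\<^sub>m (P * B)"
    using carr by (simp add: mult_smult_distrib[of _ n n])
  moreover have "(P - c \<cdot>\<^sub>m (P * B)) * Q = P * Q - (c \<cdot>\<^sub>m (P * B)) * Q"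
    by (rule minus_mult_distrib_mat) (use carr in auto)
  ultimately have "P * (1\<^sub>m n - c \<cdot>\<^sub>m B) * Q = 1\<^sub>m n - c \<cdot>\<^sub>m A"
    using carr unfolding A PQ(1) by (simp add: mult_smult_assoc_mat[of _ n n])
  then show ?thesis
    by (intro similar_mat_witI[OF PQ]) (use carr assms(2) in \<open>simp_all add: minus_carrier_mat\<close>)
qed

definition unit_multiple_mod :: "int \<Rightarrow> nat \<Rightarrow> int vec \<Rightarrow> bool" where
  "unit_multiple_mod m i v \<longleftrightarrow> (\<forall>l<dim_vec v. l \<noteq> i \<longrightarrow> [v $ l = 0] (mod m))"

lemma unit_multiple_modI:
  assumes "vec_cong_mod m v (g \<cdot>\<^sub>v unit_vec n i)"
  shows "unit_multiple_mod m i v"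
  unfolding unit_multiple_mod_def
proof (intro allI impI)
  fix l assume l: "l < dim_vec v" "l \<noteq> i"
  have "dim_vec v = n"
    using assms unfolding vec_cong_mod_def by simp
  then have "(g \<cdot>\<^sub>v unit_vec n i) $ l = 0"
    using l by (simp add: unit_vec_def)
  moreover have "[v $ l = (g \<cdot>\<^sub>v unit_vec n i) $ l] (mod m)"
    using assms l(1) unfolding vec_cong_mod_def by blast
  ultimately show "[v $ l = 0] (mod m)"
    by simp
qed

lemma unit_multiple_modD:
  assumes "unit_multiple_mod m i v" "v \<in> carrier_vec n" "i < n"
  shows "vec_cong_mod m v (v $ i \<cdot>\<^sub>v unit_vec n i)"
  unfolding vec_cong_mod_def
proof (intro conjI allI impI)
  show "dim_vec v = dim_vec (v $ i \<cdot>\<^sub>v unit_vec n i)"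
    using assms(2) by simp
  fix l assume "l < dim_vec v"
  then have l: "l < n"
    using assms(2) by simp
  show "[v $ l = (v $ i \<cdot>\<^sub>v unit_vec n i) $ l] (mod m)"
  proof (cases "l = i")
    case False
    then show ?thesis
      using assms(1,2) l by (simp add: unit_multiple_mod_def unit_vec_def)
  qed (use assms(3) in simp)
qed

definition diagonal_prefix_mod :: "int \<Rightarrow> nat \<Rightarrow> int mat \<Rightarrow> bool" where
  "diagonal_prefix_mod m j A \<longleftrightarrow>
     (\<forall>i<j. unit_multiple_mod m i (row A i) \<and> unit_multiple_mod m i (col A i))"

lemma vec_cong_mod_col_similar:
  assumes sim: "similar_mat_wit A B P Q" and A: "A \<in> carrier_mat n n" and j: "j < n"
    and unit: "col P j = unit_vec n j" "col Q j = unit_vec n j"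
    and cong: "vec_cong_mod m (col A j) (g \<cdot>\<^sub>v unit_vec n j)"
  shows "vec_cong_mod m (col B j) (g \<cdot>\<^sub>v unit_vec n j)"
proof -
  have carr: "P \<in> carrier_mat n n" "Q \<in> carrier_mat n n"
    using similar_mat_witD2[OF A sim] by auto
  have "col B j = col (Q * A) j"
    unfolding similar_mat_wit_conj[OF sim] by (rule col_mult_unit_col) (use carr A j unit in auto)
  also have "\<dots> = Q *\<^sub>v col A j"
    by (rule col_mult2[OF carr(2) A j])
  also have "vec_cong_mod m \<dots> (Q *\<^sub>v (g \<cdot>\<^sub>v unit_vec n j))"
    by (rule vec_cong_mod_mult_mat_vec[OF cong]) (use carr A in auto)
  also have "Q *\<^sub>v (g \<cdot>\<^sub>v unit_vec n j) = g \<cdot>\<^sub>v unit_vec n j"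
    using carr j unit by (simp add: mult_mat_vec_smult mult_mat_vec_unit_vec)
  finally show ?thesis .
qed

lemma vec_cong_mod_row_similar:
  assumes sim: "similar_mat_wit A B P Q" and A: "A \<in> carrier_mat n n" and i: "i < n"
    and unit: "row P i = unit_vec n i" "row Q i = unit_vec n i"
    and cong: "vec_cong_mod m (row A i) (g \<cdot>\<^sub>v unit_vec n i)"
  shows "vec_cong_mod m (row B i) (g \<cdot>\<^sub>v unit_vec n i)"
proof -
  have carr: "B \<in> carrier_mat n n" "P \<in> carrier_mat n n" "Q \<in> carrier_mat n n"
    using similar_mat_witD2[OF A sim] by auto
  have "vec_cong_mod m (col (transpose_mat B) i) (g \<cdot>\<^sub>v unit_vec n i)"
    by (rule vec_cong_mod_col_similar[OF similar_mat_wit_transpose[OF sim]])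
      (use A i unit cong carr in auto)
  then show ?thesis
    using carr i by simp
qed

lemma unit_multiple_mod_col_similar:
  assumes "similar_mat_wit A B P Q" "A \<in> carrier_mat n n" "j < n"
    and "col P j = unit_vec n j" "col Q j = unit_vec n j"
    and "unit_multiple_mod m j (col A j)"
  shows "unit_multiple_mod m j (col B j)"
proof -
  have "col A j \<in> carrier_vec n"
    using assms(2) by auto
  then show ?thesis
    using vec_cong_mod_col_similar[OF assms(1-5) unit_multiple_modD[OF assms(6) _ assms(3)]]
    by (auto intro: unit_multiple_modI)
qed

lemma unit_multiple_mod_row_similar:
  assumes "similar_mat_wit A B P Q" "A \<in> carrier_mat n n" "i < n"
    and "row P i = unit_vec n i" "row Q i = unit_vec n i"
    and "unit_multiple_mod m i (row A i)"
  shows "unit_multiple_mod m i (row B i)"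
proof -
  have "row A i \<in> carrier_vec n"
    using assms(2) by auto
  then show ?thesis
    using vec_cong_mod_row_similar[OF assms(1-5) unit_multiple_modD[OF assms(6) _ assms(3)]]
    by (auto intro: unit_multiple_modI)
qed

lemma diagonal_prefix_mod_similar:
  assumes "similar_mat_wit A B P Q" "A \<in> carrier_mat n n" "j \<le> n"
    and "\<And>i. i < j \<Longrightarrow> row P i = unit_vec n i \<and> row Q i = unit_vec n i \<and>
                        col P i = unit_vec n i \<and> col Q i = unit_vec n i"
    and "diagonal_prefix_mod m j A"
  shows "diagonal_prefix_mod m j B"
  unfolding diagonal_prefix_mod_def
proof (intro allI impI conjI)
  fix i assume "i < j"
  then have i: "i < n" and unit: "row P i = unit_vec n i" "row Q i = unit_vec n i"
      "col P i = unit_vec n i" "col Q i = unit_vec n i"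
    and diag: "unit_multiple_mod m i (row A i)" "unit_multiple_mod m i (col A i)"
    using assms(3-5) unfolding diagonal_prefix_mod_def by auto
  show "unit_multiple_mod m i (row B i)"
    by (rule unit_multiple_mod_row_similar[OF assms(1,2) i unit(1,2) diag(1)])
  show "unit_multiple_mod m i (col B i)"
    by (rule unit_multiple_mod_col_similar[OF assms(1,2) i unit(3,4) diag(2)])
qed

lemma row_unit_inverse:
  fixes P Q :: "'a::semiring_1 mat"
  assumes "P \<in> carrier_mat n n" "Q \<in> carrier_mat n n" "P * Q = 1\<^sub>m n" "i < n"
    and "row P i = unit_vec n i"
  shows "row Q i = unit_vec n i"
  using row_mult_unit_row[OF assms(1,2,4,5)] assms(3,4) by simp

lemma top_identity_block_iff_rows:
  assumes "P \<in> carrier_mat n n"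
  shows "top_identity_block q P \<longleftrightarrow> q \<le> n \<and> (\<forall>i<q. row P i = unit_vec n i)"
  using assms unfolding top_identity_block_def by (auto simp: vec_eq_iff)

definition similar_mat_top_block :: "nat \<Rightarrow> int mat \<Rightarrow> int mat \<Rightarrow> bool" where
  "similar_mat_top_block q A B \<longleftrightarrow> (\<exists>P Q. similar_mat_wit A B P Q \<and> top_identity_block q P)"

lemma similar_mat_top_blockI:
  assumes "similar_mat_wit A B P Q" "A \<in> carrier_mat n n" "q \<le> n"
    and "\<And>i. i < q \<Longrightarrow> row P i = unit_vec n i"
  shows "similar_mat_top_block q A B"
proof -
  have "P \<in> carrier_mat n n"
    using similar_mat_witD2[OF assms(2,1)] by simp
  then have "top_identity_block q P"
    using assms(3,4) by (simp add: top_identity_block_iff_rows)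
  then show ?thesis
    using assms(1) unfolding similar_mat_top_block_def by blast
qed

lemma similar_mat_top_block_refl:
  assumes "A \<in> carrier_mat n n" "q \<le> n"
  shows "similar_mat_top_block q A A"
  by (rule similar_mat_top_blockI[OF similar_mat_wit_refl[OF assms(1)] assms]) (use assms(2) in simp)

lemma similar_mat_top_block_trans:
  assumes "similar_mat_top_block q A B" "similar_mat_top_block q B C" "A \<in> carrier_mat n n"
  shows "similar_mat_top_block q A C"
proof -
  obtain P Q P' Q' where sim: "similar_mat_wit A B P Q" "similar_mat_wit B C P' Q'"
    and top: "top_identity_block q P" "top_identity_block q P'"
    using assms(1,2) unfolding similar_mat_top_block_def by blast
  have carr: "B \<in> carrier_mat n n" "P \<in> carrier_mat n n" "P' \<in> carrier_mat n n"
    using similar_mat_witD2[OF assms(3) sim(1)] similar_mat_witD2[of B n n, OF _ sim(2)] by auto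
  have q: "q \<le> n" and rows: "\<And>i. i < q \<Longrightarrow> row P i = unit_vec n i \<and> row P' i = unit_vec n i"
    using top carr by (auto simp: top_identity_block_iff_rows)
  have "row (P * P') i = unit_vec n i" if "i < q" for i
  proof -
    have "i < n" using that q by simp
    then have "row (P * P') i = row P' i"
      using row_mult_unit_row[OF carr(2,3)] rows[OF that] by blast
    then show ?thesis using rows[OF that] by simp
  qed
  then show ?thesis
    by (rule similar_mat_top_blockI[OF similar_mat_wit_trans[OF sim] assms(3) q])
qed

lemma similar_mat_top_block_carrier:
  "similar_mat_top_block q A B \<Longrightarrow> A \<in> carrier_mat n n \<Longrightarrow> B \<in> carrier_mat n n"
  unfolding similar_mat_top_block_def by (metis similar_mat_witD2(5))

lemma similar_mat_top_block_one_minus_smult: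
  assumes "similar_mat_top_block q A B" "A \<in> carrier_mat n n"
  shows "similar_mat_top_block q (1\<^sub>m n - c \<cdot>\<^sub>m A) (1\<^sub>m n - c \<cdot>\<^sub>m B)"
  using assms similar_mat_wit_one_minus_smult unfolding similar_mat_top_block_def by blast

lemma similar_mat_top_block_idempotent_mod:
  "similar_mat_top_block q A B \<Longrightarrow> mat_cong_mod m (A * A) A \<Longrightarrow> mat_cong_mod m (B * B) B"
  unfolding similar_mat_top_block_def using similar_mat_wit_idempotent_mod by blast

lemma similar_mat_top_block_rows:
  assumes "similar_mat_top_block q A B" "A \<in> carrier_mat n n"
    and "\<forall>i<q. unit_multiple_mod m i (row A i)"
  shows "\<forall>i<q. unit_multiple_mod m i (row B i)"
proof -
  obtain P Q where sim: "similar_mat_wit A B P Q" and top: "top_identity_block q P"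
    using assms(1) unfolding similar_mat_top_block_def by blast
  have carr: "P \<in> carrier_mat n n" "Q \<in> carrier_mat n n" and PQ: "P * Q = 1\<^sub>m n"
    using similar_mat_witD2[OF assms(2) sim] by auto
  have q: "q \<le> n" and rowP: "\<And>i. i < q \<Longrightarrow> row P i = unit_vec n i"
    using top carr by (auto simp: top_identity_block_iff_rows)
  have rowQ: "\<And>i. i < q \<Longrightarrow> row Q i = unit_vec n i"
    using row_unit_inverse[OF carr PQ] rowP q by auto
  show ?thesis
  proof (intro allI impI)
    fix i assume "i < q"
    then show "unit_multiple_mod m i (row B i)"
      using unit_multiple_mod_row_similar[OF sim assms(2), of i] assms(3) rowP rowQ q by simp
  qed
qed

section \<open>Clearing a pivot column and row\<close>

lemma col_similar_idempotent_mod: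
  fixes H :: "int mat"
  assumes sim: "similar_mat_wit H H' P Q" and H: "H \<in> carrier_mat n n"
    and idem: "mat_cong_mod m (H * H) H" and j: "j < n"
    and colP: "vec_cong_mod m (col P j) (u \<cdot>\<^sub>v col H j)"
  shows "vec_cong_mod m (col H' j) (unit_vec n j)"
proof -
  have carr: "P \<in> carrier_mat n n" "Q \<in> carrier_mat n n" and QP: "Q * P = 1\<^sub>m n"
    using similar_mat_witD2[OF H sim] by auto
  have HP: "vec_cong_mod m (col (H * P) j) (col P j)"
  proof -
    have "col (H * P) j = H *\<^sub>v col P j"
      by (rule col_mult2[OF H carr(1) j])
    also have "vec_cong_mod m \<dots> (H *\<^sub>v (u \<cdot>\<^sub>v col H j))"
      by (rule vec_cong_mod_mult_mat_vec[OF colP]) (use H carr in simp)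
    also have "H *\<^sub>v (u \<cdot>\<^sub>v col H j) = u \<cdot>\<^sub>v col (H * H) j"
      using H j by (simp add: mult_mat_vec_smult col_mult2[OF H H j])
    also have "vec_cong_mod m \<dots> (u \<cdot>\<^sub>v col H j)"
      by (rule vec_cong_mod_smult[OF mat_cong_mod_col[OF idem]]) (use H j in simp)
    also have "vec_cong_mod m \<dots> (col P j)"
      by (rule vec_cong_mod_sym[OF colP])
    finally show ?thesis .
  qed
  have "col H' j = Q *\<^sub>v col (H * P) j"
    unfolding similar_mat_wit_conj[OF sim]
    using carr H j by (simp add: assoc_mult_mat[of Q n n H n P n] col_mult2[of Q n n "H * P" n])
  also have "vec_cong_mod m \<dots> (Q *\<^sub>v col P j)"
    by (rule vec_cong_mod_mult_mat_vec[OF HP]) (use carr H in simp)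
  also have "Q *\<^sub>v col P j = unit_vec n j"
    using col_mult2[OF carr(2,1) j] QP j by simp
  finally show ?thesis .
qed

lemma clear_column_mod:
  fixes H :: "int mat"
  assumes H: "H \<in> carrier_mat n n" and idem: "mat_cong_mod m (H * H) H" and j: "j < n"
    and u: "[u * H $$ (j,j) = 1] (mod m)"
  obtains P Q H' where "similar_mat_wit H H' P Q"
    and "\<And>b. b < n \<Longrightarrow> b \<noteq> j \<Longrightarrow> col P b = unit_vec n b \<and> col Q b = unit_vec n b"
    and "\<And>a. a < n \<Longrightarrow> a = j \<or> [H $$ (a,j) = 0] (mod m) \<Longrightarrow>
           row P a = unit_vec n a \<and> row Q a = unit_vec n a"
    and "vec_cong_mod m (col H' j) (unit_vec n j)"
proof -
  \<comment> \<open>Reducing modulo \<open>m\<close> makes \<open>c a\<close> vanish whenever \<open>H\<^sub>a\<^sub>j \<equiv> 0\<close>, keeping those rows of \<open>P\<close>.\<close>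
  define c where "c a = (if a = j then 0 else (u * H $$ (a,j)) mod m)" for a
  define e where "e b = (if b = j then 1 else 0 :: int)" for b
  define P where "P = transvection n c e"
  define Q where "Q = transvection n (\<lambda>a. - c a) e"
  have "(\<Sum>t<n. e t * c t) = 0"
    by (rule sum.neutral) (simp add: e_def c_def)
  then have sim: "similar_mat_wit H (Q * H * P) P Q"
    unfolding P_def Q_def by (rule similar_mat_wit_transvection[OF H])
  have carr: "P \<in> carrier_mat n n" "Q \<in> carrier_mat n n"
    using similar_mat_witD2[OF H sim] by auto
  have cols: "col P b = unit_vec n b \<and> col Q b = unit_vec n b" if "b < n" "b \<noteq> j" for b
    using that by (simp add: P_def Q_def col_transvection e_def)
  have rows: "row P a = unit_vec n a \<and> row Q a = unit_vec n a"
    if "a < n" "a = j \<or> [H $$ (a,j) = 0] (mod m)" for a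
  proof -
    have "c a = 0"
      using that(2) by (auto simp: c_def cong_0_iff)
    then show ?thesis
      using that(1) by (simp add: P_def Q_def row_transvection)
  qed
  have colP: "vec_cong_mod m (col P j) (u \<cdot>\<^sub>v col H j)"
    unfolding vec_cong_mod_def
  proof (intro conjI allI impI)
    fix a assume "a < dim_vec (col P j)"
    then have a: "a < n" using carr by simp
    show "[col P j $ a = (u \<cdot>\<^sub>v col H j) $ a] (mod m)"
    proof (cases "a = j")
      case True
      then show ?thesis
        using a j H u by (simp add: P_def transvection_def c_def e_def cong_sym)
    next
      case False
      then show ?thesis
        using a j H by (simp add: P_def transvection_def c_def e_def)
    qed
  qed (use carr H in simp)
  have "vec_cong_mod m (col (Q * H * P) j) (unit_vec n j)"
    by (rule col_similar_idempotent_mod[OF sim H idem j colP])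
  then show ?thesis
    using that[OF sim] cols rows by blast
qed

lemma clear_row_mod:
  fixes H :: "int mat"
  assumes H: "H \<in> carrier_mat n n" and idem: "mat_cong_mod m (H * H) H" and j: "j < n"
    and u: "[u * H $$ (j,j) = 1] (mod m)"
  obtains P Q H' where "similar_mat_wit H H' P Q"
    and "\<And>a. a < n \<Longrightarrow> a \<noteq> j \<Longrightarrow> row P a = unit_vec n a \<and> row Q a = unit_vec n a"
    and "\<And>b. b < n \<Longrightarrow> b = j \<or> [H $$ (j,b) = 0] (mod m) \<Longrightarrow>
           col P b = unit_vec n b \<and> col Q b = unit_vec n b"
    and "vec_cong_mod m (row H' j) (unit_vec n j)"
proof -
  have HT: "transpose_mat H \<in> carrier_mat n n"
    using H by simp
  have "mat_cong_mod m (transpose_mat H * transpose_mat H) (transpose_mat H)"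
    using mat_cong_mod_transpose[OF idem] by (simp add: transpose_mult[OF H H])
  moreover have "[u * transpose_mat H $$ (j,j) = 1] (mod m)"
    using u H j by simp
  ultimately obtain P Q K where sim: "similar_mat_wit (transpose_mat H) K P Q"
    and cols: "\<And>b. b < n \<Longrightarrow> b \<noteq> j \<Longrightarrow> col P b = unit_vec n b \<and> col Q b = unit_vec n b"
    and rows: "\<And>a. a < n \<Longrightarrow> a = j \<or> [transpose_mat H $$ (a,j) = 0] (mod m) \<Longrightarrow>
                 row P a = unit_vec n a \<and> row Q a = unit_vec n a"
    and K: "vec_cong_mod m (col K j) (unit_vec n j)"
    using clear_column_mod[OF HT _ j] by metis
  have carr: "K \<in> carrier_mat n n" "P \<in> carrier_mat n n" "Q \<in> carrier_mat n n"
    using similar_mat_witD2[OF HT sim] by auto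
  show ?thesis
  proof (rule that)
    show "similar_mat_wit H (transpose_mat K) (transpose_mat Q) (transpose_mat P)"
      using similar_mat_wit_transpose[OF sim] by simp
    show "row (transpose_mat Q) a = unit_vec n a \<and> row (transpose_mat P) a = unit_vec n a"
      if "a < n" "a \<noteq> j" for a
      using cols[OF that] that carr by simp
    show "col (transpose_mat Q) b = unit_vec n b \<and> col (transpose_mat P) b = unit_vec n b"
      if "b < n" "b = j \<or> [H $$ (j,b) = 0] (mod m)" for b
      using rows[of b] that carr H j by auto
    show "vec_cong_mod m (row (transpose_mat K) j) (unit_vec n j)"
      using K carr j by simp
  qed
qed

lemma diagonal_prefix_mod_Suc:
  "diagonal_prefix_mod m (Suc j) A \<longleftrightarrow> diagonal_prefix_mod m j A \<and>
     unit_multiple_mod m j (row A j) \<and> unit_multiple_mod m j (col A j)"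
  unfolding diagonal_prefix_mod_def by (auto simp: less_Suc_eq)

lemma similar_mat_top_block_clear_column:
  fixes H :: "int mat"
  assumes H: "H \<in> carrier_mat n n" and idem: "mat_cong_mod m (H * H) H"
    and j: "j < n" and u: "[u * H $$ (j,j) = 1] (mod m)"
    and prefix: "diagonal_prefix_mod m j H"
    and q: "q \<le> n" and top: "\<forall>i<q. unit_multiple_mod m i (row H i)"
  obtains H' where "similar_mat_top_block q H H'" "diagonal_prefix_mod m j H'"
    "vec_cong_mod m (col H' j) (unit_vec n j)"
proof -
  obtain P Q H' where sim: "similar_mat_wit H H' P Q"
    and cols: "\<And>b. b < n \<Longrightarrow> b \<noteq> j \<Longrightarrow> col P b = unit_vec n b \<and> col Q b = unit_vec n b"
    and rows: "\<And>a. a < n \<Longrightarrow> a = j \<or> [H $$ (a,j) = 0] (mod m) \<Longrightarrow>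
                 row P a = unit_vec n a \<and> row Q a = unit_vec n a"
    and col_j: "vec_cong_mod m (col H' j) (unit_vec n j)"
    using clear_column_mod[OF H idem j u] by metis
  have "[H $$ (i,j) = 0] (mod m)" if "i < n" "i \<noteq> j" "i < j \<or> i < q" for i
    using that prefix top H j unfolding diagonal_prefix_mod_def unit_multiple_mod_def by auto
  then have rows': "row P i = unit_vec n i \<and> row Q i = unit_vec n i"
    if "i < n" "i < j \<or> i < q" for i
    using rows that by blast
  have "similar_mat_top_block q H H'"
    by (rule similar_mat_top_blockI[OF sim H q]) (use rows' q in auto)
  moreover have "diagonal_prefix_mod m j H'"
    by (rule diagonal_prefix_mod_similar[OF sim H _ _ prefix]) (use j rows' cols in auto)
  ultimately show ?thesis
    using that col_j by blast
qed

lemma similar_mat_top_block_clear_row: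
  fixes H :: "int mat"
  assumes H: "H \<in> carrier_mat n n" and idem: "mat_cong_mod m (H * H) H"
    and j: "j < n" and q: "q \<le> j" and prefix: "diagonal_prefix_mod m j H"
    and col_j: "vec_cong_mod m (col H j) (unit_vec n j)"
  obtains H' where "similar_mat_top_block q H H'" "diagonal_prefix_mod m (Suc j) H'"
proof -
  have "[1 * H $$ (j,j) = 1] (mod m)"
    using col_j H j unfolding vec_cong_mod_def by auto
  then obtain P Q H' where sim: "similar_mat_wit H H' P Q"
    and rows: "\<And>a. a < n \<Longrightarrow> a \<noteq> j \<Longrightarrow> row P a = unit_vec n a \<and> row Q a = unit_vec n a"
    and cols: "\<And>b. b < n \<Longrightarrow> b = j \<or> [H $$ (j,b) = 0] (mod m) \<Longrightarrow>
                 col P b = unit_vec n b \<and> col Q b = unit_vec n b"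
    and row_j: "vec_cong_mod m (row H' j) (unit_vec n j)"
    using clear_row_mod[OF H idem j] by metis
  have row_j_zero: "[H $$ (j,b) = 0] (mod m)" if "b < j" for b
    using that prefix H j unfolding diagonal_prefix_mod_def unit_multiple_mod_def by auto
  have "diagonal_prefix_mod m j H'"
    by (rule diagonal_prefix_mod_similar[OF sim H _ _ prefix]) (use j rows cols row_j_zero in auto)
  moreover have "vec_cong_mod m (col H' j) (1 \<cdot>\<^sub>v unit_vec n j)"
    by (rule vec_cong_mod_col_similar[OF sim H j]) (use cols col_j j in auto)
  then have "unit_multiple_mod m j (col H' j)"
    by (rule unit_multiple_modI)
  moreover have "unit_multiple_mod m j (row H' j)"
    using row_j by (intro unit_multiple_modI[of m _ 1]) simp
  moreover have "similar_mat_top_block q H H'"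
    by (rule similar_mat_top_blockI[OF sim H]) (use rows q j in auto)
  ultimately show ?thesis
    using that by (simp add: diagonal_prefix_mod_Suc)
qed

lemma diagonal_prefix_mod_extend_unit_pivot:
  fixes H :: "int mat"
  assumes H: "H \<in> carrier_mat n n" and idem: "mat_cong_mod m (H * H) H"
    and j: "j < n" and unit: "coprime (H $$ (j,j)) m"
    and prefix: "diagonal_prefix_mod m j H"
    and q: "q \<le> n" and top: "\<forall>i<q. unit_multiple_mod m i (row H i)"
  obtains H' where "similar_mat_top_block q H H'" "diagonal_prefix_mod m (Suc j) H'"
proof -
  obtain u where "[H $$ (j,j) * u = 1] (mod m)"
    using cong_solve_coprime_int[OF unit] by blast
  then have u: "[u * H $$ (j,j) = 1] (mod m)"
    by (simp add: mult.commute)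
  obtain H1 where sim1: "similar_mat_top_block q H H1" and prefix1: "diagonal_prefix_mod m j H1"
    and col_j: "vec_cong_mod m (col H1 j) (unit_vec n j)"
    using similar_mat_top_block_clear_column[OF H idem j u prefix q top] by blast
  have H1: "H1 \<in> carrier_mat n n"
    by (rule similar_mat_top_block_carrier[OF sim1 H])
  show ?thesis
  proof (cases "j < q")
    case True
    have "unit_multiple_mod m j (row H1 j)"
      using similar_mat_top_block_rows[OF sim1 H top] True by blast
    moreover have "unit_multiple_mod m j (col H1 j)"
      using col_j by (intro unit_multiple_modI[of m _ 1]) simp
    ultimately have "diagonal_prefix_mod m (Suc j) H1"
      using prefix1 by (simp add: diagonal_prefix_mod_Suc)
    with sim1 show ?thesis
      by (rule that)
  next
    case False
    obtain H2 where "similar_mat_top_block q H1 H2" "diagonal_prefix_mod m (Suc j) H2"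
      using similar_mat_top_block_clear_row[OF H1 similar_mat_top_block_idempotent_mod[OF sim1 idem]
          j _ prefix1 col_j] False by (metis not_less)
    then show ?thesis
      using that similar_mat_top_block_trans[OF sim1 _ H] by blast
  qed
qed

section \<open>Diagonalising idempotents modulo \<open>m\<close>\<close>

lemma smult_one_mat [simp]: "(1::'a::monoid_mult) \<cdot>\<^sub>m A = A"
  by (rule eq_matI) auto

lemma index_one_minus_smult_square:
  fixes E :: "'a::comm_ring_1 mat"
  assumes E: "E \<in> carrier_mat n n" and i: "i < n" and l: "l < n"
  shows "((1\<^sub>m n - c \<cdot>\<^sub>m E) * (1\<^sub>m n - c \<cdot>\<^sub>m E)) $$ (i,l) =
    1\<^sub>m n $$ (i,l) - 2 * c * E $$ (i,l) + c^2 * (E * E) $$ (i,l)"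
proof -
  have summand: "((if i = t then 1 else 0) - c * E $$ (i,t)) * ((if t = l then 1 else 0) - c * E $$ (t,l)) =
      (if t = i then (if t = l then 1 else 0) - c * E $$ (t,l) else 0) - (if t = l then c * E $$ (i,t) else 0)
      + c^2 * (E $$ (i,t) * E $$ (t,l))" for t
    by (simp add: algebra_simps power2_eq_square)
  have "((1\<^sub>m n - c \<cdot>\<^sub>m E) * (1\<^sub>m n - c \<cdot>\<^sub>m E)) $$ (i,l) =
      (\<Sum>t<n. ((if i = t then 1 else 0) - c * E $$ (i,t)) * ((if t = l then 1 else 0) - c * E $$ (t,l)))"
    using E i l by (simp add: scalar_prod_def atLeast0LessThan)
  also have "\<dots> = 1\<^sub>m n $$ (i,l) - 2 * c * E $$ (i,l) + c^2 * (\<Sum>t<n. E $$ (i,t) * E $$ (t,l))"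
    unfolding summand using i l by (simp add: sum.distrib sum_subtractf sum_distrib_left)
  also have "(\<Sum>t<n. E $$ (i,t) * E $$ (t,l)) = (E * E) $$ (i,l)"
    using E i l by (simp add: scalar_prod_def atLeast0LessThan)
  finally show ?thesis .
qed

lemma idempotent_mod_one_minus:
  fixes E :: "int mat"
  assumes E: "E \<in> carrier_mat n n" and idem: "mat_cong_mod m (E * E) E"
  shows "mat_cong_mod m ((1\<^sub>m n - E) * (1\<^sub>m n - E)) (1\<^sub>m n - E)"
proof (rule mat_cong_modI)
  fix i l assume il: "i < n" "l < n"
  have "m dvd (E * E) $$ (i,l) - E $$ (i,l)"
    using idem E il unfolding mat_cong_mod_def by (simp add: cong_iff_dvd_diff)
  then show "[((1\<^sub>m n - E) * (1\<^sub>m n - E)) $$ (i,l) = (1\<^sub>m n - E) $$ (i,l)] (mod m)"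
    using index_one_minus_smult_square[OF E il, of 1] E il by (simp add: cong_iff_dvd_diff)
qed (use E in \<open>auto intro: minus_carrier_mat\<close>)

lemma unit_multiple_mod_row_one_minus:
  assumes "A \<in> carrier_mat n n" "i < n" "unit_multiple_mod m i (row A i)"
  shows "unit_multiple_mod m i (row (1\<^sub>m n - A) i)"
  using assms unfolding unit_multiple_mod_def by (auto simp: cong_0_iff)

lemma unit_multiple_mod_col_one_minus:
  assumes "A \<in> carrier_mat n n" "i < n" "unit_multiple_mod m i (col A i)"
  shows "unit_multiple_mod m i (col (1\<^sub>m n - A) i)"
  using assms unfolding unit_multiple_mod_def by (auto simp: cong_0_iff)

lemma diagonal_prefix_mod_one_minus:
  assumes "A \<in> carrier_mat n n" "j \<le> n" "diagonal_prefix_mod m j A"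
  shows "diagonal_prefix_mod m j (1\<^sub>m n - A)"
  using assms unit_multiple_mod_row_one_minus unit_multiple_mod_col_one_minus
  unfolding diagonal_prefix_mod_def by (meson order_less_le_trans)

lemma diagonal_prefix_mod_extend:
  fixes G :: "int mat"
  assumes G: "G \<in> carrier_mat n n" and idem: "mat_cong_mod m (G * G) G"
    and local: "\<And>x. coprime x m \<or> coprime (1 - x) m"
    and j: "j < n" and prefix: "diagonal_prefix_mod m j G"
    and q: "q \<le> n" and top: "\<forall>i<q. unit_multiple_mod m i (row G i)"
  obtains G' where "similar_mat_top_block q G G'" "diagonal_prefix_mod m (Suc j) G'"
proof (cases "coprime (G $$ (j,j)) m")
  case True
  then show ?thesis
    using diagonal_prefix_mod_extend_unit_pivot[OF G idem j _ prefix q top] that by blast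
next
  case False
  define H where "H = 1\<^sub>m n - G"
  have H: "H \<in> carrier_mat n n"
    unfolding H_def using G by (auto intro: minus_carrier_mat)
  have unit: "coprime (H $$ (j,j)) m"
    using local[of "G $$ (j,j)"] False G j by (simp add: H_def)
  have idem_H: "mat_cong_mod m (H * H) H"
    unfolding H_def by (rule idempotent_mod_one_minus[OF G idem])
  have prefix_H: "diagonal_prefix_mod m j H"
    unfolding H_def by (rule diagonal_prefix_mod_one_minus[OF G _ prefix]) (use j in simp)
  have top_H: "\<forall>i<q. unit_multiple_mod m i (row H i)"
    unfolding H_def using top G q unit_multiple_mod_row_one_minus by simp
  obtain H' where sim: "similar_mat_top_block q H H'" and prefix': "diagonal_prefix_mod m (Suc j) H'"
    using diagonal_prefix_mod_extend_unit_pivot[OF H idem_H j unit prefix_H q top_H] by blast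
  have H': "H' \<in> carrier_mat n n"
    by (rule similar_mat_top_block_carrier[OF sim H])
  have "1\<^sub>m n - H = G"
    unfolding H_def using G by (intro eq_matI) auto
  then have "similar_mat_top_block q G (1\<^sub>m n - H')"
    using similar_mat_top_block_one_minus_smult[OF sim H, of 1] by simp
  moreover have "diagonal_prefix_mod m (Suc j) (1\<^sub>m n - H')"
    by (rule diagonal_prefix_mod_one_minus[OF H' _ prefix']) (use j in simp)
  ultimately show ?thesis
    by (rule that)
qed

lemma idempotent_mod_diagonal_prefix:
  fixes G :: "int mat"
  assumes G: "G \<in> carrier_mat n n" and idem: "mat_cong_mod m (G * G) G"
    and local: "\<And>x. coprime x m \<or> coprime (1 - x) m"
    and q: "q \<le> n" and top: "\<forall>i<q. unit_multiple_mod m i (row G i)"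
  shows "j \<le> n \<Longrightarrow> \<exists>G'. similar_mat_top_block q G G' \<and> diagonal_prefix_mod m j G'"
proof (induction j)
  case 0
  show ?case
    using similar_mat_top_block_refl[OF G q] by (auto simp: diagonal_prefix_mod_def)
next
  case (Suc j)
  then obtain G' where sim: "similar_mat_top_block q G G'" and prefix: "diagonal_prefix_mod m j G'"
    by auto
  obtain G'' where "similar_mat_top_block q G' G''" "diagonal_prefix_mod m (Suc j) G''"
  proof (rule diagonal_prefix_mod_extend[OF similar_mat_top_block_carrier[OF sim G]
        similar_mat_top_block_idempotent_mod[OF sim idem] local _ prefix q
        similar_mat_top_block_rows[OF sim G top]])
    show "j < n"
      using Suc.prems by simp
  qed
  then show ?case
    using similar_mat_top_block_trans[OF sim _ G] by blast
qed

lemma idempotent_residue_mod: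
  fixes x m :: int
  assumes idem: "[x * x = x] (mod m)" and local: "coprime x m \<or> coprime (1 - x) m"
  shows "[x = (if coprime x m then 1 else 0)] (mod m)"
proof (cases "coprime x m")
  case True
  have "[x * x = x * 1] (mod m)"
    using idem by simp
  then have "[x = 1] (mod m)"
    by (rule iffD1[OF cong_mult_lcancel[OF True]])
  then show ?thesis
    using True by simp
next
  case False
  then have unit: "coprime (1 - x) m"
    using local by blast
  have "[(1 - x) * x = (1 - x) * 0] (mod m)"
    using cong_diff[OF cong_refl[of x] idem] by (simp add: algebra_simps)
  then have "[x = 0] (mod m)"
    by (rule iffD1[OF cong_mult_lcancel[OF unit]])
  then show ?thesis
    using False by simp
qed

lemma diagonal_entry_square_mod:
  fixes G :: "int mat"
  assumes G: "G \<in> carrier_mat n n" and idem: "mat_cong_mod m (G * G) G" and i: "i < n"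
    and diag: "unit_multiple_mod m i (col G i)"
  shows "[G $$ (i,i) * G $$ (i,i) = G $$ (i,i)] (mod m)"
proof -
  have col: "vec_cong_mod m (col G i) (G $$ (i,i) \<cdot>\<^sub>v unit_vec n i)"
    using unit_multiple_modD[OF diag _ i] G i by auto
  have "(G * G) $$ (i,i) = (G *\<^sub>v col G i) $ i"
    using G i by simp
  also have "[\<dots> = (G *\<^sub>v (G $$ (i,i) \<cdot>\<^sub>v unit_vec n i)) $ i] (mod m)"
    using vec_cong_mod_mult_mat_vec[OF col] G i unfolding vec_cong_mod_def by auto
  also have "(G *\<^sub>v (G $$ (i,i) \<cdot>\<^sub>v unit_vec n i)) $ i = G $$ (i,i) * G $$ (i,i)"
    using G i by (simp add: mult_mat_vec_smult mult_mat_vec_unit_vec)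
  finally have "[(G * G) $$ (i,i) = G $$ (i,i) * G $$ (i,i)] (mod m)" .
  moreover have "[(G * G) $$ (i,i) = G $$ (i,i)] (mod m)"
    using idem G i unfolding mat_cong_mod_def by simp
  ultimately show ?thesis
    by (metis cong_sym cong_trans)
qed

lemma idempotent_mod_diagonal_zero_one:
  fixes G :: "int mat"
  assumes G: "G \<in> carrier_mat n n" and idem: "mat_cong_mod m (G * G) G"
    and local: "\<And>x. coprime x m \<or> coprime (1 - x) m"
    and diag: "diagonal_prefix_mod m n G"
  obtains D where "D \<in> carrier_mat n n" "diagonal_mat D" "\<forall>i<n. D $$ (i,i) \<in> {0, 1}"
    "mat_cong_mod m G D"
proof -
  have square: "[G $$ (i,i) * G $$ (i,i) = G $$ (i,i)] (mod m)" if "i < n" for i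
    using diagonal_entry_square_mod[OF G idem that] diag that unfolding diagonal_prefix_mod_def by blast
  define D where "D = mat n n (\<lambda>(i,l). if i = l \<and> coprime (G $$ (i,i)) m then 1 else 0 :: int)"
  show ?thesis
  proof (rule that)
    show "D \<in> carrier_mat n n" "diagonal_mat D" "\<forall>i<n. D $$ (i,i) \<in> {0, 1}"
      by (auto simp: D_def diagonal_mat_def)
    show "mat_cong_mod m G D"
    proof (rule mat_cong_modI[OF G])
      fix i l assume il: "i < n" "l < n"
      show "[G $$ (i,l) = D $$ (i,l)] (mod m)"
      proof (cases "i = l")
        case True
        then show ?thesis
          using idempotent_residue_mod[OF square local] il by (simp add: D_def)
      next
        case False
        then show ?thesis
          using diag G il unfolding diagonal_prefix_mod_def unit_multiple_mod_def by (simp add: D_def)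
      qed
    qed (simp add: D_def)
  qed
qed

lemma coprime_or_coprime_one_minus_power2:
  fixes x :: int
  shows "coprime x (2 ^ r) \<or> coprime (1 - x) (2 ^ r)"
  by (cases "even x") auto

section \<open>Involutions modulo powers of two\<close>

lemma mat_cong_modE:
  fixes A B :: "int mat"
  assumes cong: "mat_cong_mod c A B" and A: "A \<in> carrier_mat nr nc"
  obtains E where "E \<in> carrier_mat nr nc" "A = B - c \<cdot>\<^sub>m E"
proof -
  define E where "E = mat nr nc (\<lambda>ij. (B $$ ij - A $$ ij) div c)"
  have B: "B \<in> carrier_mat nr nc"
    using cong A unfolding mat_cong_mod_def by auto
  have "E \<in> carrier_mat nr nc"
    by (simp add: E_def)
  moreover have "A = B - c \<cdot>\<^sub>m E"
  proof (rule eq_matI)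
    fix i l assume "i < dim_row (B - c \<cdot>\<^sub>m E)" "l < dim_col (B - c \<cdot>\<^sub>m E)"
    then have il: "i < nr" "l < nc"
      by (simp_all add: E_def)
    have "c dvd A $$ (i,l) - B $$ (i,l)"
      using cong A il unfolding mat_cong_mod_def by (simp add: cong_iff_dvd_diff)
    then have "c dvd B $$ (i,l) - A $$ (i,l)"
      by (subst dvd_diff_commute)
    then have "c * ((B $$ (i,l) - A $$ (i,l)) div c) = B $$ (i,l) - A $$ (i,l)"
      by (rule dvd_mult_div_cancel)
    moreover have "(B - c \<cdot>\<^sub>m E) $$ (i,l) = B $$ (i,l) - c * ((B $$ (i,l) - A $$ (i,l)) div c)"
      using il B by (simp add: E_def)
    ultimately show "A $$ (i,l) = (B - c \<cdot>\<^sub>m E) $$ (i,l)"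
      by simp
  qed (use A B in \<open>simp_all add: E_def\<close>)
  ultimately show ?thesis
    by (rule that)
qed

lemma idempotent_mod_of_square_one_minus_two_smult:
  fixes E :: "int mat"
  assumes E: "E \<in> carrier_mat n n"
    and square: "mat_cong_mod (4 * m) ((1\<^sub>m n - 2 \<cdot>\<^sub>m E) * (1\<^sub>m n - 2 \<cdot>\<^sub>m E)) (1\<^sub>m n)"
  shows "mat_cong_mod m (E * E) E"
proof (rule mat_cong_modI)
  fix i l assume il: "i < n" "l < n"
  have "[((1\<^sub>m n - 2 \<cdot>\<^sub>m E) * (1\<^sub>m n - 2 \<cdot>\<^sub>m E)) $$ (i,l) = 1\<^sub>m n $$ (i,l)] (mod 4 * m)"
    using square E il unfolding mat_cong_mod_def by simp
  then have "4 * m dvd 4 * ((E * E) $$ (i,l) - E $$ (i,l))"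
    unfolding index_one_minus_smult_square[OF E il] by (simp add: cong_iff_dvd_diff algebra_simps)
  then have "m dvd (E * E) $$ (i,l) - E $$ (i,l)"
    by (subst (asm) dvd_times_left_cancel_iff) simp_all
  then show "[(E * E) $$ (i,l) = E $$ (i,l)] (mod m)"
    by (simp add: cong_iff_dvd_diff)
qed (use E in auto)

lemma mat_cong_mod_one_minus_smult:
  fixes X Y :: "int mat"
  assumes cong: "mat_cong_mod m X Y" and X: "X \<in> carrier_mat n n"
  shows "mat_cong_mod (c * m) (1\<^sub>m n - c \<cdot>\<^sub>m X) (1\<^sub>m n - c \<cdot>\<^sub>m Y)"
proof (rule mat_cong_modI)
  have Y: "Y \<in> carrier_mat n n"
    using cong X unfolding mat_cong_mod_def by auto
  then show "1\<^sub>m n - c \<cdot>\<^sub>m Y \<in> carrier_mat n n"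
    by (auto intro: minus_carrier_mat)
  fix i l assume il: "i < n" "l < n"
  have "m dvd X $$ (i,l) - Y $$ (i,l)"
    using cong X il unfolding mat_cong_mod_def by (simp add: cong_iff_dvd_diff)
  then have "c * m dvd c * (Y $$ (i,l) - X $$ (i,l))"
    by (subst (asm) dvd_diff_commute) simp
  then show "[(1\<^sub>m n - c \<cdot>\<^sub>m X) $$ (i,l) = (1\<^sub>m n - c \<cdot>\<^sub>m Y) $$ (i,l)] (mod c * m)"
    using X Y il by (simp add: cong_iff_dvd_diff algebra_simps)
qed (use X in \<open>auto intro: minus_carrier_mat\<close>)

lemma sign_diagonal_one_minus_two_smult:
  assumes "D \<in> carrier_mat n n" "diagonal_mat D" "\<forall>i<n. D $$ (i,i) \<in> {0, 1}"
  shows "sign_diagonal (1\<^sub>m n - 2 \<cdot>\<^sub>m (D :: int mat))"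
  using assms unfolding sign_diagonal_def diagonal_mat_def by auto

lemma involution_mod_power2_similar_sign_diagonal:
  fixes A :: "int mat"
  assumes k: "k \<ge> 2" and A: "A \<in> carrier_mat n n"
    and A_mod_2: "mat_cong_mod 2 A (1\<^sub>m n)"
    and A_square: "mat_cong_mod (2 ^ (k + 1)) (A * A) (1\<^sub>m n)"
    and top: "top_identity_block q A"
  shows "\<exists>P Pinv D. P \<in> carrier_mat n n \<and> Pinv \<in> carrier_mat n n \<and>
           P * Pinv = 1\<^sub>m n \<and> Pinv * P = 1\<^sub>m n \<and> top_identity_block q P \<and>
           D \<in> carrier_mat n n \<and> sign_diagonal D \<and> mat_cong_mod (2 ^ k) (Pinv * A * P) D"
proof -
  define m :: int where "m = 2 ^ (k - 1)"
  obtain j where "k = Suc j"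
    using k by (cases k) auto
  then have pow: "(2::int) ^ (k + 1) = 4 * m" "(2::int) ^ k = 2 * m"
    unfolding m_def by simp_all
  obtain E where E: "E \<in> carrier_mat n n" and A_E: "A = 1\<^sub>m n - 2 \<cdot>\<^sub>m E"
    using mat_cong_modE[OF A_mod_2 A] by blast
  have idem: "mat_cong_mod m (E * E) E"
    using idempotent_mod_of_square_one_minus_two_smult[OF E] A_square unfolding A_E pow(1) .
  have q: "q \<le> n"
    using top A unfolding top_identity_block_def by simp
  have top_E: "\<forall>i<q. unit_multiple_mod m i (row E i)"
    using top A E q unfolding A_E top_identity_block_def unit_multiple_mod_def by auto
  have local: "\<And>x. coprime x m \<or> coprime (1 - x) m"
    unfolding m_def by (rule coprime_or_coprime_one_minus_power2)
  obtain E' where sim: "similar_mat_top_block q E E'" and diag: "diagonal_prefix_mod m n E'"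
    using idempotent_mod_diagonal_prefix[OF E idem local q top_E] by blast
  have E': "E' \<in> carrier_mat n n"
    by (rule similar_mat_top_block_carrier[OF sim E])
  obtain D where D: "D \<in> carrier_mat n n" "diagonal_mat D" "\<forall>i<n. D $$ (i,i) \<in> {0, 1}"
    and E'_D: "mat_cong_mod m E' D"
    using idempotent_mod_diagonal_zero_one[OF E' similar_mat_top_block_idempotent_mod[OF sim idem] local diag]
    by blast
  obtain P Q where sim_wit: "similar_mat_wit E E' P Q" and top_P: "top_identity_block q P"
    using sim unfolding similar_mat_top_block_def by blast
  have sim_A: "similar_mat_wit A (1\<^sub>m n - 2 \<cdot>\<^sub>m E') P Q"
    unfolding A_E by (rule similar_mat_wit_one_minus_smult[OF sim_wit E])
  have "mat_cong_mod (2 ^ k) (Q * A * P) (1\<^sub>m n - 2 \<cdot>\<^sub>m D)"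
    using mat_cong_mod_one_minus_smult[OF E'_D E', of 2] similar_mat_wit_conj[OF sim_A] pow(2) by simp
  moreover have "sign_diagonal (1\<^sub>m n - 2 \<cdot>\<^sub>m D)"
    using sign_diagonal_one_minus_two_smult[OF D] .
  moreover have "1\<^sub>m n - 2 \<cdot>\<^sub>m D \<in> carrier_mat n n"
    using D by (auto intro: minus_carrier_mat)
  ultimately show ?thesis
    using similar_mat_witD2[OF A sim_A] top_P by blast
qed

theorem lemma10p2:
  fixes A :: "int mat" and n k :: nat
  assumes "k \<ge> 2"
    and "A \<in> carrier_mat n n" and "invertible_mat A"
    and "mat_cong_mod 2 A (1\<^sub>m n)"
    and "mat_cong_mod (2 ^ (k + 1)) (A * A) (1\<^sub>m n)"
  shows "(\<exists>P Pinv D. P \<in> carrier_mat n n \<and> Pinv \<in> carrier_mat n n \<and>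
            P * Pinv = 1\<^sub>m n \<and> Pinv * P = 1\<^sub>m n \<and>
            D \<in> carrier_mat n n \<and> sign_diagonal D \<and>
            mat_cong_mod (2 ^ k) (Pinv * A * P) D)
       \<and> (\<forall>q\<le>n. top_identity_block q A \<longrightarrow>
            (\<exists>P Pinv D. P \<in> carrier_mat n n \<and> Pinv \<in> carrier_mat n n \<and>
              P * Pinv = 1\<^sub>m n \<and> Pinv * P = 1\<^sub>m n \<and>
              top_identity_block q P \<and>
              D \<in> carrier_mat n n \<and> sign_diagonal D \<and>
              mat_cong_mod (2 ^ k) (Pinv * A * P) D))"
proof -
  have "top_identity_block 0 A"
    using assms(2) by (simp add: top_identity_block_def)
  then show ?thesis
    using involution_mod_power2_similar_sign_diagonal[OF assms(1,2,4,5)] by blast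
qed

end
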